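(* In every finite poset model $\mathcal{F}=(W,\preceq,\mathcal{V})$, the relation $\equiv_\eta$ on $W$ is a weak $\pm$-bisimulation.
   Context: Fix a set PL of proposition letters. A poset model is $\mathcal{F}=(W,\preceq,\mathcal{V})$ with $(W,\preceq)$ a partial order and $\mathcal{V}:\mathrm{PL}\to\mathcal{P}(W)$. $[m;n]=\{i\in\mathbb{N}:m\le i\le n\}$, $[m;n)=\{i:m\le i<n\}$. An undirected path of length $\ell$ from $w$ is $\pi:[0;\ell]\to W$ with $\pi(0)=w$ and, for each $i\in[0;\ell)$, $\pi(i)\preceq\pi(i+1)$ or $\pi(i+1)\preceq\pi(i)$. A $\downarrow$-path is an undirected path of length $\ell\ge1$ with $\pi(\ell)\preceq\pi(\ell-1)$. A $\pm$-path is a $\downarrow$-path of length $\ell\ge2$ with $\pi(0)\preceq\pi(1)$. SLCS$_\eta$ formulas: $\Phi::=p\mid\neg\Phi\mid\Phi_1\wedge\Phi_2\mid\eta(\Phi_1,\Phi_2)$; $w\models p$ iff $w\in\mathcal{V}(p)$; negation, conjunction standard; $w\models\eta(\Phi_1,\Phi_2)$ iff some $\pm$-path $\pi:[0;\ell]\to W$ from $w$ has $\pi(\ell)\models\Phi_2$ and $\pi(i)\models\Phi_1$ for all $i\in[0;\ell)$. $w_1\equiv_\eta w_2$ means $w_1,w_2$ satisfy the same SLCS$_\eta$ formulas. A weak $\pm$-bisimulation is a symmetric relation $B\subseteq W\times W$ such that whenever $B(w_1,w_2)$: (1) for every $p$, $w_1\in\mathcal{V}(p)$ iff $w_2\in\mathcal{V}(p)$;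 (2) for all $u_1,d_1\in W$ with ($w_1\preceq u_1$ or $u_1\preceq w_1$) and $d_1\preceq u_1$, there is a $\pm$-path $\pi_2:[0;\ell_2]\to W$ from $w_2$ with $B(d_1,\pi_2(\ell_2))$ and, for all $j\in[0;\ell_2)$, $B(w_1,\pi_2(j))$ or $B(u_1,\pi_2(j))$. *)

theory Defs
  imports Main
begin

definition poset_model :: "'w set \<Rightarrow> ('w \<Rightarrow> 'w \<Rightarrow> bool) \<Rightarrow> ('p \<Rightarrow> 'w set) \<Rightarrow> bool" where
  "poset_model W le V \<longleftrightarrow>
     (\<forall>x\<in>W. le x x) \<and>
     (\<forall>x\<in>W. \<forall>y\<in>W. le x y \<and> le y x \<longrightarrow> x = y) \<and>
     (\<forall>x\<in>W. \<forall>y\<in>W. \<forall>z\<in>W. le x y \<and> le y z \<longrightarrow> le x z) \<and>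
     (\<forall>p. V p \<subseteq> W)"

definition undirected_path :: "'w set \<Rightarrow> ('w \<Rightarrow> 'w \<Rightarrow> bool) \<Rightarrow> 'w \<Rightarrow> nat \<Rightarrow> (nat \<Rightarrow> 'w) \<Rightarrow> bool" where
  "undirected_path W le w l \<pi> \<longleftrightarrow>
     (\<forall>i\<le>l. \<pi> i \<in> W) \<and> \<pi> 0 = w \<and>
     (\<forall>i<l. le (\<pi> i) (\<pi> (Suc i)) \<or> le (\<pi> (Suc i)) (\<pi> i))"

definition down_path :: "'w set \<Rightarrow> ('w \<Rightarrow> 'w \<Rightarrow> bool) \<Rightarrow> 'w \<Rightarrow> nat \<Rightarrow> (nat \<Rightarrow> 'w) \<Rightarrow> bool" where
  "down_path W le w l \<pi> \<longleftrightarrow>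
     undirected_path W le w l \<pi> \<and> l \<ge> 1 \<and> le (\<pi> l) (\<pi> (l - 1))"

definition pm_path :: "'w set \<Rightarrow> ('w \<Rightarrow> 'w \<Rightarrow> bool) \<Rightarrow> 'w \<Rightarrow> nat \<Rightarrow> (nat \<Rightarrow> 'w) \<Rightarrow> bool" where
  "pm_path W le w l \<pi> \<longleftrightarrow>
     down_path W le w l \<pi> \<and> l \<ge> 2 \<and> le (\<pi> 0) (\<pi> 1)"

datatype 'p slcs = Prop 'p | Neg "'p slcs" | Conj "'p slcs" "'p slcs" | Eta "'p slcs" "'p slcs"

fun sat :: "'w set \<Rightarrow> ('w \<Rightarrow> 'w \<Rightarrow> bool) \<Rightarrow> ('p \<Rightarrow> 'w set) \<Rightarrow> 'w \<Rightarrow> 'p slcs \<Rightarrow> bool" where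
  "sat W le V w (Prop p) = (w \<in> V p)"
| "sat W le V w (Neg \<phi>) = (\<not> sat W le V w \<phi>)"
| "sat W le V w (Conj \<phi> \<psi>) = (sat W le V w \<phi> \<and> sat W le V w \<psi>)"
| "sat W le V w (Eta \<phi> \<psi>) =
     (\<exists>l \<pi>. pm_path W le w l \<pi> \<and> sat W le V (\<pi> l) \<psi> \<and> (\<forall>i<l. sat W le V (\<pi> i) \<phi>))"

definition eta_equiv :: "'w set \<Rightarrow> ('w \<Rightarrow> 'w \<Rightarrow> bool) \<Rightarrow> ('p \<Rightarrow> 'w set) \<Rightarrow> 'w \<Rightarrow> 'w \<Rightarrow> bool" where
  "eta_equiv W le V w1 w2 \<longleftrightarrow>
     w1 \<in> W \<and> w2 \<in> W \<and> (\<forall>\<phi>. sat W le V w1 \<phi> \<longleftrightarrow> sat W le V w2 \<phi>)"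

definition weak_pm_bisim :: "'w set \<Rightarrow> ('w \<Rightarrow> 'w \<Rightarrow> bool) \<Rightarrow> ('p \<Rightarrow> 'w set) \<Rightarrow> ('w \<Rightarrow> 'w \<Rightarrow> bool) \<Rightarrow> bool" where
  "weak_pm_bisim W le V B \<longleftrightarrow>
     (\<forall>x y. B x y \<longrightarrow> x \<in> W \<and> y \<in> W) \<and>
     (\<forall>x y. B x y \<longrightarrow> B y x) \<and>
     (\<forall>w1 w2. B w1 w2 \<longrightarrow>
        (\<forall>p. w1 \<in> V p \<longleftrightarrow> w2 \<in> V p) \<and>
        (\<forall>u1\<in>W. \<forall>d1\<in>W. (le w1 u1 \<or> le u1 w1) \<and> le d1 u1 \<longrightarrow>
           (\<exists>l2 \<pi>2. pm_path W le w2 l2 \<pi>2 \<and> B d1 (\<pi>2 l2) \<and>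
              (\<forall>j<l2. B w1 (\<pi>2 j) \<or> B u1 (\<pi>2 j)))))"

end

theory Submission
  imports Defs
begin

text \<open>On a finite model every \<open>\<equiv>\<^sub>\<eta>\<close>-class is defined by a single formula: conjoin one
  distinguishing formula for each of the finitely many inequivalent points. Given
  \<open>w\<^sub>1 \<equiv>\<^sub>\<eta> w\<^sub>2\<close>, \<open>u\<^sub>1\<close> comparable with \<open>w\<^sub>1\<close> and \<open>d\<^sub>1 \<preceq> u\<^sub>1\<close>, the \<open>\<pm>\<close>-path
  \<open>w\<^sub>1 \<preceq> u\<^sub>1 \<succeq> d\<^sub>1\<close> (or \<open>w\<^sub>1 \<preceq> w\<^sub>1 \<succeq> u\<^sub>1 \<succeq> d\<^sub>1\<close>) witnesses
  \<open>\<eta>(\<chi>\<^sub>w \<or> \<chi>\<^sub>u, \<chi>\<^sub>d)\<close> at \<open>w\<^sub>1\<close>, built from the characteristic formulas of the three classes.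
  The formula then holds at \<open>w\<^sub>2\<close>, and its witnessing path is the required one.\<close>

definition slcs_true :: "'p slcs" where
  "slcs_true = Neg (Conj (Prop undefined) (Neg (Prop undefined)))"

definition slcs_or :: "'p slcs \<Rightarrow> 'p slcs \<Rightarrow> 'p slcs" where
  "slcs_or \<phi> \<psi> = Neg (Conj (Neg \<phi>) (Neg \<psi>))"

lemma sat_slcs_true [simp]: "sat W le V w slcs_true"
  by (simp add: slcs_true_def)

lemma sat_slcs_or [simp]: "sat W le V w (slcs_or \<phi> \<psi>) \<longleftrightarrow> sat W le V w \<phi> \<or> sat W le V w \<psi>"
  by (simp add: slcs_or_def)

lemma eta_equiv_refl: "x \<in> W \<Longrightarrow> eta_equiv W le V x x"
  by (simp add: eta_equiv_def)

lemma eta_equiv_sym: "eta_equiv W le V x y \<Longrightarrow> eta_equiv W le V y x"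
  by (auto simp: eta_equiv_def)

lemma eta_equiv_in_carrier: "eta_equiv W le V x y \<Longrightarrow> x \<in> W \<and> y \<in> W"
  by (simp add: eta_equiv_def)

lemma eta_equiv_same_props: "eta_equiv W le V x y \<Longrightarrow> x \<in> V p \<longleftrightarrow> y \<in> V p"
  unfolding eta_equiv_def by (metis sat.simps(1))

lemma finite_set_distinguishing_formula:
  assumes "finite S"
  shows "\<exists>\<phi>. sat W le V x \<phi> \<and>
    (\<forall>y\<in>S. sat W le V y \<phi> \<longrightarrow> (\<forall>\<psi>. sat W le V x \<psi> \<longleftrightarrow> sat W le V y \<psi>))"
  using assms
proof (induction S rule: finite_induct)
  case empty
  show ?case by (intro exI[of _ slcs_true]) simp
next
  case (insert y S)
  then obtain \<phi> where \<phi>: "sat W le V x \<phi>"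
    "\<forall>y\<in>S. sat W le V y \<phi> \<longrightarrow> (\<forall>\<psi>. sat W le V x \<psi> \<longleftrightarrow> sat W le V y \<psi>)"
    by blast
  show ?case
  proof (cases "\<forall>\<psi>. sat W le V x \<psi> \<longleftrightarrow> sat W le V y \<psi>")
    case True
    then show ?thesis using \<phi> by blast
  next
    case False
    then obtain \<psi> where "sat W le V x \<psi> \<noteq> sat W le V y \<psi>" by blast
    then obtain \<psi>' where "sat W le V x \<psi>'" "\<not> sat W le V y \<psi>'"
      by (cases "sat W le V x \<psi>") (auto intro: that[of "Neg \<psi>"])
    then show ?thesis using \<phi> by (intro exI[of _ "Conj \<phi> \<psi>'"]) simp
  qed
qed

lemma characteristic_formula:
  assumes "finite W" "x \<in> W"
  obtains \<chi> where "\<And>y. y \<in> W \<Longrightarrow> sat W le V y \<chi> \<longleftrightarrow> eta_equiv W le V x y"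
proof -
  obtain \<phi> where \<phi>: "sat W le V x \<phi>"
    "\<forall>y\<in>W. sat W le V y \<phi> \<longrightarrow> (\<forall>\<psi>. sat W le V x \<psi> \<longleftrightarrow> sat W le V y \<psi>)"
    using finite_set_distinguishing_formula[OF assms(1)] by blast
  have "sat W le V y \<phi> \<longleftrightarrow> eta_equiv W le V x y" if "y \<in> W" for y
    using that assms(2) \<phi> unfolding eta_equiv_def by blast
  then show thesis by (rule that)
qed

lemma pm_path_up_down:
  assumes "w \<in> W" "u \<in> W" "d \<in> W" "le w u" "le d u"
  shows "pm_path W le w 2 ((!) [w, u, d])"
  using assms
  by (auto simp: pm_path_def down_path_def undirected_path_def numeral_2_eq_2
      less_Suc_eq le_Suc_eq)

lemma pm_path_stay_down_down:
  assumes "w \<in> W" "u \<in> W" "d \<in> W" "le w w" "le u w" "le d u"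
  shows "pm_path W le w 3 ((!) [w, w, u, d])"
  using assms
  by (auto simp: pm_path_def down_path_def undirected_path_def numeral_3_eq_3
      less_Suc_eq le_Suc_eq)

lemma pm_path_via_comparable:
  assumes "w \<in> W" "u \<in> W" "d \<in> W" "le w w" "le w u \<or> le u w" "le d u"
  obtains l \<pi> where "pm_path W le w l \<pi>" "\<pi> l = d" "\<And>i. i < l \<Longrightarrow> \<pi> i = w \<or> \<pi> i = u"
  using assms(5)
proof
  assume "le w u"
  with assms show thesis
    by (intro that[OF pm_path_up_down]) (auto simp: less_Suc_eq numeral_2_eq_2)
next
  assume "le u w"
  with assms show thesis
    by (intro that[OF pm_path_stay_down_down]) (auto simp: less_Suc_eq numeral_3_eq_3)
qed

lemma pm_path_in_carrier: "pm_path W le w l \<pi> \<Longrightarrow> i \<le> l \<Longrightarrow> \<pi> i \<in> W"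
  by (simp add: pm_path_def down_path_def undirected_path_def)

lemma eta_equiv_pm_step:
  assumes "poset_model W le V" "finite W" "eta_equiv W le V w1 w2"
    and "u1 \<in> W" "d1 \<in> W" "le w1 u1 \<or> le u1 w1" "le d1 u1"
  shows "\<exists>l2 \<pi>2. pm_path W le w2 l2 \<pi>2 \<and> eta_equiv W le V d1 (\<pi>2 l2) \<and>
    (\<forall>j<l2. eta_equiv W le V w1 (\<pi>2 j) \<or> eta_equiv W le V u1 (\<pi>2 j))"
proof -
  have w1: "w1 \<in> W" using assms(3) by (simp add: eta_equiv_def)
  obtain \<chi>w where \<chi>w: "\<And>y. y \<in> W \<Longrightarrow> sat W le V y \<chi>w \<longleftrightarrow> eta_equiv W le V w1 y"
    using characteristic_formula[OF assms(2) w1] by blast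
  obtain \<chi>u where \<chi>u: "\<And>y. y \<in> W \<Longrightarrow> sat W le V y \<chi>u \<longleftrightarrow> eta_equiv W le V u1 y"
    using characteristic_formula[OF assms(2,4)] by blast
  obtain \<chi>d where \<chi>d: "\<And>y. y \<in> W \<Longrightarrow> sat W le V y \<chi>d \<longleftrightarrow> eta_equiv W le V d1 y"
    using characteristic_formula[OF assms(2,5)] by blast
  let ?\<phi> = "Eta (slcs_or \<chi>w \<chi>u) \<chi>d"
  have "le w1 w1" using assms(1) w1 by (simp add: poset_model_def)
  then obtain l \<pi> where "pm_path W le w1 l \<pi>" "\<pi> l = d1" "\<And>i. i < l \<Longrightarrow> \<pi> i = w1 \<or> \<pi> i = u1"
    using pm_path_via_comparable[OF w1 assms(4,5) _ assms(6,7)] by blast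
  then have "sat W le V w1 ?\<phi>"
    using \<chi>w \<chi>u \<chi>d w1 assms(4,5) by (auto intro!: exI[of _ l] exI[of _ \<pi>] eta_equiv_refl)
  then have "sat W le V w2 ?\<phi>"
    using assms(3) by (simp only: eta_equiv_def)
  then obtain l2 \<pi>2 where \<pi>2: "pm_path W le w2 l2 \<pi>2" "sat W le V (\<pi>2 l2) \<chi>d"
    "\<forall>j<l2. sat W le V (\<pi>2 j) (slcs_or \<chi>w \<chi>u)"
    by auto
  then show ?thesis
    using \<chi>w \<chi>u \<chi>d pm_path_in_carrier[OF \<pi>2(1)]
    by (intro exI[of _ l2] exI[of _ \<pi>2]) auto
qed

theorem lemma13:
  fixes W :: "'w set" and le :: "'w \<Rightarrow> 'w \<Rightarrow> bool" and V :: "'p \<Rightarrow> 'w set"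
  assumes "poset_model W le V" and "finite W"
  shows "weak_pm_bisim W le V (eta_equiv W le V)"
  unfolding weak_pm_bisim_def
  by (intro conjI allI impI ballI)
    (auto dest: eta_equiv_in_carrier eta_equiv_sym eta_equiv_same_props
      intro: eta_equiv_pm_step[OF assms])

end
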